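(* Let $\mathcal H_3=\mathbb{R}^3$ with coordinates $(x,y,z)$ and metric $g=dx^2+dy^2+(dz-x\,dy)^2$ (the Heisenberg group), and let $\pi:\mathcal H_3\to\mathbb{R}^2$, $\pi(x,y,z)=(x,y)$ (a Riemannian submersion onto the Euclidean plane with minimal fibres). Let $\gamma:I\to\mathbb{R}^2$ be a curve parametrised by arc length with signed curvature $k$. Then the cylinder $S=\pi^{-1}(\gamma(I))\subset\mathcal H_3$ is a biminimal surface with respect to $\lambda$ if and only if $\gamma$ is a biminimal curve with respect to $\lambda+1$ in $\mathbb{R}^2$, i.e. $k''=k^3+(1+\lambda)k$.
   Context: For a map $\phi$: tension field $\tau(\phi)=\operatorname{trace}\nabla d\phi$, bitension field $\tau_2(\phi)=\sum_i(\nabla^\phi_{e_i}\nabla^\phi_{e_i}-\nabla^\phi_{\nabla_{e_i}e_i})\tau(\phi)+\sum_iR^N(d\phi(e_i),\tau(\phi))d\phi(e_i)$, with $R(X,Y)Z=\nabla_{[X,Y]}Z-\nabla_X\nabla_YZ+\nabla_Y\nabla_XZ$. An immersion is biminimal with respect to $\lambda\in\mathbb{R}$ if $[\tau_2(\phi)]^\perp-\lambda[\tau(\phi)]^\perp=0$ ($\perp$ = normal component). For an arc-length plane curve with signed curvature $k$, biminimality with respect to $\mu$ means $k''-k^3-\mu k=0$. *)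

theory Defs
  imports "HOL-Analysis.Analysis"
begin

definition pd :: "(real^'n \<Rightarrow> real) \<Rightarrow> 'n::finite \<Rightarrow> real^'n \<Rightarrow> real" where
  "pd f i p = deriv (\<lambda>h. f (p + h *\<^sub>R axis i 1)) 0"

definition minv :: "('n::finite \<Rightarrow> 'n \<Rightarrow> real) \<Rightarrow> 'n \<Rightarrow> 'n \<Rightarrow> real" where
  "minv A i j = matrix_inv (\<chi> a b. A a b) $ i $ j"

text \<open>A metric is given by its coefficients G p i j. Christoffel symbols Gamma^k_ij.\<close>
definition christoffel ::
  "(real^'n \<Rightarrow> 'n \<Rightarrow> 'n \<Rightarrow> real) \<Rightarrow> real^'n \<Rightarrow> 'n::finite \<Rightarrow> 'n \<Rightarrow> 'n \<Rightarrow> real" where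
  "christoffel G p k i j = (1/2) * (\<Sum>l\<in>UNIV. minv (G p) k l *
      (pd (\<lambda>q. G q j l) i p + pd (\<lambda>q. G q i l) j p - pd (\<lambda>q. G q i j) l p))"

text \<open>Curvature components with the paper's sign convention
  R(X,Y)Z = nabla_[X,Y] Z - nabla_X nabla_Y Z + nabla_Y nabla_X Z;
  curv G p l i j k is the l-th component of R(d_i,d_j)d_k.\<close>
definition curv ::
  "(real^'n \<Rightarrow> 'n \<Rightarrow> 'n \<Rightarrow> real) \<Rightarrow> real^'n \<Rightarrow> 'n::finite \<Rightarrow> 'n \<Rightarrow> 'n \<Rightarrow> 'n \<Rightarrow> real" where
  "curv G p l i j k = - (pd (\<lambda>q. christoffel G q l j k) i p - pd (\<lambda>q. christoffel G q l i k) j p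
      + (\<Sum>m\<in>UNIV. christoffel G p l i m * christoffel G p m j k
                   - christoffel G p l j m * christoffel G p m i k))"

definition riem ::
  "(real^'n \<Rightarrow> 'n \<Rightarrow> 'n \<Rightarrow> real) \<Rightarrow> real^'n \<Rightarrow> real^'n \<Rightarrow> real^'n \<Rightarrow> real^'n \<Rightarrow> real^'n::finite" where
  "riem G p X Y Z = (\<chi> l. \<Sum>i\<in>UNIV. \<Sum>j\<in>UNIV. \<Sum>k\<in>UNIV. X$i * Y$j * Z$k * curv G p l i j k)"

definition ginner :: "(real^'n \<Rightarrow> 'n \<Rightarrow> 'n \<Rightarrow> real) \<Rightarrow> real^'n \<Rightarrow> real^'n \<Rightarrow> real^'n::finite \<Rightarrow> real" where
  "ginner G p v w = (\<Sum>i\<in>UNIV. \<Sum>j\<in>UNIV. G p i j * v$i * w$j)"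

definition dphi :: "(real^'m \<Rightarrow> real^'n) \<Rightarrow> 'm::finite \<Rightarrow> real^'m \<Rightarrow> real^'n::finite" where
  "dphi \<phi> a p = (\<chi> k. pd (\<lambda>q. \<phi> q $ k) a p)"

definition indmetric ::
  "(real^'n \<Rightarrow> 'n \<Rightarrow> 'n \<Rightarrow> real) \<Rightarrow> (real^'m \<Rightarrow> real^'n::finite) \<Rightarrow> real^'m \<Rightarrow> 'm::finite \<Rightarrow> 'm \<Rightarrow> real" where
  "indmetric G \<phi> p a b = ginner G (\<phi> p) (dphi \<phi> a p) (dphi \<phi> b p)"

definition covd ::
  "(real^'n \<Rightarrow> 'n \<Rightarrow> 'n \<Rightarrow> real) \<Rightarrow> (real^'m \<Rightarrow> real^'n) \<Rightarrow> (real^'m \<Rightarrow> real^'n)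
     \<Rightarrow> 'm::finite \<Rightarrow> real^'m \<Rightarrow> real^'n::finite" where
  "covd G \<phi> V a p = (\<chi> k. pd (\<lambda>q. V q $ k) a p
      + (\<Sum>i\<in>UNIV. \<Sum>j\<in>UNIV. christoffel G (\<phi> p) k i j * (dphi \<phi> a p)$i * V p $ j))"

text \<open>Tension field tau(phi) = trace nabla d phi (trace w.r.t. the induced metric).\<close>
definition tension ::
  "(real^'n \<Rightarrow> 'n \<Rightarrow> 'n \<Rightarrow> real) \<Rightarrow> (real^'m \<Rightarrow> real^'n) \<Rightarrow> real^'m::finite \<Rightarrow> real^'n::finite" where
  "tension G \<phi> p = (\<Sum>a\<in>UNIV. \<Sum>b\<in>UNIV. minv (indmetric G \<phi> p) a b *\<^sub>R
      (covd G \<phi> (dphi \<phi> b) a p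
       - (\<Sum>c\<in>UNIV. christoffel (indmetric G \<phi>) p c a b *\<^sub>R dphi \<phi> c p)))"

definition roughlap ::
  "(real^'n \<Rightarrow> 'n \<Rightarrow> 'n \<Rightarrow> real) \<Rightarrow> (real^'m \<Rightarrow> real^'n) \<Rightarrow> (real^'m \<Rightarrow> real^'n)
     \<Rightarrow> real^'m::finite \<Rightarrow> real^'n::finite" where
  "roughlap G \<phi> V p = (\<Sum>a\<in>UNIV. \<Sum>b\<in>UNIV. minv (indmetric G \<phi> p) a b *\<^sub>R
      (covd G \<phi> (covd G \<phi> V b) a p
       - (\<Sum>c\<in>UNIV. christoffel (indmetric G \<phi>) p c a b *\<^sub>R covd G \<phi> V c p)))"

text \<open>Bitension field tau_2(phi) = trace(nabla nabla - nabla_nabla) tau + trace R^N(d phi, tau) d phi.\<close>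
definition bitension ::
  "(real^'n \<Rightarrow> 'n \<Rightarrow> 'n \<Rightarrow> real) \<Rightarrow> (real^'m \<Rightarrow> real^'n) \<Rightarrow> real^'m::finite \<Rightarrow> real^'n::finite" where
  "bitension G \<phi> p = roughlap G \<phi> (tension G \<phi>) p
     + (\<Sum>a\<in>UNIV. \<Sum>b\<in>UNIV. minv (indmetric G \<phi> p) a b *\<^sub>R
          riem G (\<phi> p) (dphi \<phi> a p) (tension G \<phi> p) (dphi \<phi> b p))"

definition normalpart ::
  "(real^'n \<Rightarrow> 'n \<Rightarrow> 'n \<Rightarrow> real) \<Rightarrow> (real^'m \<Rightarrow> real^'n) \<Rightarrow> real^'m::finite \<Rightarrow> real^'n \<Rightarrow> real^'n::finite" where
  "normalpart G \<phi> p V = V - (\<Sum>a\<in>UNIV. \<Sum>b\<in>UNIV. (minv (indmetric G \<phi> p) a b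
       * ginner G (\<phi> p) V (dphi \<phi> a p)) *\<^sub>R dphi \<phi> b p)"

definition biminimal_immersion ::
  "(real^'n \<Rightarrow> 'n \<Rightarrow> 'n \<Rightarrow> real) \<Rightarrow> (real^'m \<Rightarrow> real^'n) \<Rightarrow> (real^'m::finite) set \<Rightarrow> real \<Rightarrow> bool" where
  "biminimal_immersion G \<phi> U lam \<longleftrightarrow>
     (\<forall>p\<in>U. normalpart G \<phi> p (bitension G \<phi> p) - lam *\<^sub>R normalpart G \<phi> p (tension G \<phi> p) = (0::real^'n::finite))"

text \<open>g = dx^2 + dy^2 + (dz - x dy)^2, coordinates (x,y,z) = (p$1,p$2,p$3).\<close>
definition heis_metric :: "real^3 \<Rightarrow> 3 \<Rightarrow> 3 \<Rightarrow> real" where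
  "heis_metric p i j =
     (if i = 1 \<and> j = 1 then 1
      else if i = 2 \<and> j = 2 then 1 + (p$1)^2
      else if (i = 2 \<and> j = 3) \<or> (i = 3 \<and> j = 2) then - (p$1)
      else if i = 3 \<and> j = 3 then 1
      else 0)"

definition hproj :: "real^3 \<Rightarrow> real^2" where
  "hproj p = vector [p$1, p$2]"

text \<open>Parametrisation (s,t) |-> (gamma_1 s, gamma_2 s, t) of the cylinder pi^{-1}(gamma(I)).\<close>
definition cylinder :: "(real \<Rightarrow> real^2) \<Rightarrow> real^2 \<Rightarrow> real^3" where
  "cylinder \<gamma> q = vector [\<gamma> (q$1) $ 1, \<gamma> (q$1) $ 2, q$2]"

definition signed_curvature :: "(real \<Rightarrow> real^2) \<Rightarrow> real \<Rightarrow> real" where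
  "signed_curvature \<gamma> s =
     deriv (\<lambda>t. \<gamma> t $ 1) s * deriv (deriv (\<lambda>t. \<gamma> t $ 2)) s
   - deriv (\<lambda>t. \<gamma> t $ 2) s * deriv (deriv (\<lambda>t. \<gamma> t $ 1)) s"

definition biminimal_curve :: "(real \<Rightarrow> real^2) \<Rightarrow> real set \<Rightarrow> real \<Rightarrow> bool" where
  "biminimal_curve \<gamma> I \<mu> \<longleftrightarrow>
     (\<forall>s\<in>I. deriv (deriv (signed_curvature \<gamma>)) s
              - (signed_curvature \<gamma> s)^3 - \<mu> * signed_curvature \<gamma> s = 0)"

end

theory Submission
  imports Defs
begin

(* Let the curve (X, Y) have unit tangent (C, S) and curvature K. Along the cylinder, the horizontal
  lifts \<nu> = (-S, C, X C) of the normal and h = (C, S, X S) of the tangent, together with the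
  vertical field \<partial>\<^sub>z, form an orthonormal frame of the Heisenberg metric, and the
  coordinate tangent fields are \<partial>\<^sub>s = h - X S \<partial>\<^sub>z and \<partial>\<^sub>t = \<partial>\<^sub>z.
  Expressing the Levi-Civita connection in this frame reduces everything to scalar algebra:
  the tension field is K \<nu>, its rough Laplacian is (K'' - K\<^sup>3 - K/2) \<nu> - 3 K K' h + K' \<partial>\<^sub>z,
  and the curvature term is -(K/2) \<nu>. Since h and \<partial>\<^sub>z are tangent to the cylinder,
  the normal part of \<tau>\<^sub>2 - \<lambda> \<tau> is (K'' - K\<^sup>3 - (\<lambda> + 1) K) \<nu>. *)

lemma two_cases:
  fixes i :: 2
  obtains "i = 1" | "i = 2"
  using exhaust_2 by blast

lemma three_cases:
  fixes i :: 3
  obtains "i = 1" | "i = 2" | "i = 3"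
  using exhaust_3 by blast

lemma pd_eq_if_depends_on_coordinate:
  fixes f :: "real^'n::finite \<Rightarrow> real"
  assumes U: "open U" "p$m \<in> U"
    and f: "\<And>q. q$m \<in> U \<Longrightarrow> f q = F (q$m)"
    and F: "(F has_real_derivative F') (at (p$m))"
  shows "pd f l p = (if l = m then F' else 0)"
proof -
  define d where "d = (if l = m then 1 else (0::real))"
  have line: "(p + h *\<^sub>R axis l 1)$m = p$m + h * d" for h
    by (simp add: d_def axis_def)
  have deriv: "((\<lambda>h. F (p$m + h * d)) has_real_derivative F' * d) (at 0)"
    using F by (auto intro!: derivative_eq_intros DERIV_chain2[where f=F])
  have "open {h. p$m + h * d \<in> U}"
    using open_vimage[OF U(1), of "\<lambda>h. p$m + h * d"]
    by (simp add: vimage_def continuous_on_add continuous_on_mult_right continuous_on_id)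
  moreover have "F (p$m + h * d) = f (p + h *\<^sub>R axis l 1)" if "p$m + h * d \<in> U" for h
    using f[of "p + h *\<^sub>R axis l 1", unfolded line] that by simp
  ultimately have "((\<lambda>h. f (p + h *\<^sub>R axis l 1)) has_real_derivative F' * d) (at 0)"
    by (intro has_field_derivative_transform_within_open[OF deriv]) (use U(2) in auto)
  then show ?thesis
    unfolding pd_def by (simp add: DERIV_imp_deriv d_def)
qed

lemma pd_coordinate_fun:
  assumes "(F has_real_derivative F') (at (p$m))"
  shows "pd (\<lambda>q::real^'n::finite. F (q$m)) l p = (if l = m then F' else 0)"
  by (rule pd_eq_if_depends_on_coordinate[of UNIV]) (use assms in auto)

lemma minv_eqI:
  fixes B :: "real^'n::finite^'n"
  assumes AB: "(\<chi> a b. A a b) ** B = mat 1" and BA: "B ** (\<chi> a b. A a b) = mat 1"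
  shows "minv A i j = B $ i $ j"
proof -
  let ?M = "(\<chi> a b. A a b) :: real^'n^'n"
  let ?B = "SOME B'::real^'n^'n. ?M ** B' = mat 1 \<and> B' ** ?M = mat 1"
  have inverse: "?M ** ?B = mat 1 \<and> ?B ** ?M = mat 1"
    by (rule someI[of _ B]) (use AB BA in auto)
  have "?B = ?B ** (?M ** B)"
    using AB by (simp add: matrix_mul_rid)
  also have "\<dots> = (?B ** ?M) ** B"
    by (simp add: matrix_mul_assoc)
  also have "\<dots> = B"
    using inverse by (simp add: matrix_mul_lid)
  finally have "?B = B" .
  then show ?thesis
    unfolding minv_def matrix_inv_def by simp
qed

section \<open>The Heisenberg metric in coordinates\<close>

definition heis_coeff :: "real \<Rightarrow> 3 \<Rightarrow> 3 \<Rightarrow> real" where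
  "heis_coeff x = heis_metric (vector [x, 0, 0])"

lemma heis_metric_eq_coeff: "heis_metric p = heis_coeff (p$1)"
  by (simp add: heis_coeff_def heis_metric_def fun_eq_iff)

definition heis_coeff_dx :: "real \<Rightarrow> 3 \<Rightarrow> 3 \<Rightarrow> real" where
  "heis_coeff_dx x i j =
     (if i = 2 \<and> j = 2 then 2 * x
      else if (i = 2 \<and> j = 3) \<or> (i = 3 \<and> j = 2) then - 1
      else 0)"

lemma heis_coeff_has_derivative:
  "((\<lambda>x. heis_coeff x i j) has_real_derivative heis_coeff_dx x i j) (at x)"
  by (cases i rule: three_cases; cases j rule: three_cases)
     (auto simp: heis_coeff_def heis_metric_def heis_coeff_dx_def intro!: derivative_eq_intros)

lemma pd_heis_metric:
  "pd (\<lambda>q. heis_metric q i j) l p = (if l = 1 then heis_coeff_dx (p$1) i j else 0)"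
  unfolding heis_metric_eq_coeff by (rule pd_coordinate_fun[OF heis_coeff_has_derivative])

definition heis_inv :: "real \<Rightarrow> 3 \<Rightarrow> 3 \<Rightarrow> real" where
  "heis_inv x i j =
     (if i = 1 \<and> j = 1 then 1
      else if i = 2 \<and> j = 2 then 1
      else if (i = 2 \<and> j = 3) \<or> (i = 3 \<and> j = 2) then x
      else if i = 3 \<and> j = 3 then 1 + x^2
      else 0)"

lemma minv_heis_metric: "minv (heis_metric p) i j = heis_inv (p$1) i j"
proof -
  have "minv (heis_metric p) i j = (\<chi> i j. heis_inv (p$1) i j) $ i $ j"
    by (rule minv_eqI)
       (simp_all add: matrix_matrix_mult_def vec_eq_iff forall_3 sum_3 mat_def heis_metric_def
          heis_inv_def power2_eq_square field_simps)
  then show ?thesis by simp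
qed

definition heis_chr :: "real \<Rightarrow> 3 \<Rightarrow> 3 \<Rightarrow> 3 \<Rightarrow> real" where
  "heis_chr x k i j =
    (if k = 1 then
       (if i = 2 \<and> j = 2 then - x else if (i = 2 \<and> j = 3) \<or> (i = 3 \<and> j = 2) then 1/2 else 0)
     else if k = 2 then
       (if (i = 1 \<and> j = 2) \<or> (i = 2 \<and> j = 1) then x/2
        else if (i = 1 \<and> j = 3) \<or> (i = 3 \<and> j = 1) then - 1/2 else 0)
     else
       (if (i = 1 \<and> j = 2) \<or> (i = 2 \<and> j = 1) then (x^2 - 1)/2
        else if (i = 1 \<and> j = 3) \<or> (i = 3 \<and> j = 1) then - x/2 else 0))"

definition heis_chr_dx :: "real \<Rightarrow> 3 \<Rightarrow> 3 \<Rightarrow> 3 \<Rightarrow> real" where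
  "heis_chr_dx x k i j =
    (if k = 1 then (if i = 2 \<and> j = 2 then - 1 else 0)
     else if k = 2 then (if (i = 1 \<and> j = 2) \<or> (i = 2 \<and> j = 1) then 1/2 else 0)
     else
       (if (i = 1 \<and> j = 2) \<or> (i = 2 \<and> j = 1) then x
        else if (i = 1 \<and> j = 3) \<or> (i = 3 \<and> j = 1) then - 1/2 else 0))"

lemma christoffel_heis_metric: "christoffel heis_metric p k i j = heis_chr (p$1) k i j"
  unfolding christoffel_def pd_heis_metric minv_heis_metric
  by (cases k rule: three_cases; cases i rule: three_cases; cases j rule: three_cases)
     (simp_all add: sum_3 heis_inv_def heis_coeff_dx_def heis_chr_def field_simps power2_eq_square)

lemma heis_chr_has_derivative:
  "((\<lambda>x. heis_chr x k i j) has_real_derivative heis_chr_dx x k i j) (at x)"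
  by (cases k rule: three_cases; cases i rule: three_cases; cases j rule: three_cases)
     (auto simp: heis_chr_def heis_chr_dx_def intro!: derivative_eq_intros)

lemma curv_heis_metric:
  "curv heis_metric p l i j k =
     - ((if i = 1 then heis_chr_dx (p$1) l j k else 0) - (if j = 1 then heis_chr_dx (p$1) l i k else 0)
        + (\<Sum>m\<in>UNIV. heis_chr (p$1) l i m * heis_chr (p$1) m j k - heis_chr (p$1) l j m * heis_chr (p$1) m i k))"
  unfolding curv_def christoffel_heis_metric
  by (simp add: pd_coordinate_fun[OF heis_chr_has_derivative])

section \<open>Plane curves parametrised by arc length\<close>

locale arclength_curve =
  fixes \<gamma> :: "real \<Rightarrow> real^2" and I :: "real set"
  assumes open_I: "open I"
    and smooth: "\<And>i n s. s \<in> I \<Longrightarrow>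
        ((deriv ^^ n) (\<lambda>t. \<gamma> t $ i) has_real_derivative (deriv ^^ Suc n) (\<lambda>t. \<gamma> t $ i) s) (at s)"
    and arclength: "\<And>s. s \<in> I \<Longrightarrow> (deriv (\<lambda>t. \<gamma> t $ 1) s)^2 + (deriv (\<lambda>t. \<gamma> t $ 2) s)^2 = 1"
begin

definition X :: "real \<Rightarrow> real" where "X = (\<lambda>t. \<gamma> t $ 1)"
definition Y :: "real \<Rightarrow> real" where "Y = (\<lambda>t. \<gamma> t $ 2)"
definition C :: "real \<Rightarrow> real" where "C = deriv X"
definition S :: "real \<Rightarrow> real" where "S = deriv Y"
definition K :: "real \<Rightarrow> real" where "K = signed_curvature \<gamma>"
definition K' :: "real \<Rightarrow> real" where "K' = deriv K"
definition K'' :: "real \<Rightarrow> real" where "K'' = deriv K'"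

lemma K''_eq: "deriv (deriv (signed_curvature \<gamma>)) = K''"
  by (simp add: K''_def K'_def K_def)

lemma K_eq: "K = (\<lambda>s. C s * deriv S s - S s * deriv C s)"
  by (simp add: K_def signed_curvature_def[abs_def] C_def S_def X_def Y_def)

lemma unit_tangent: "s \<in> I \<Longrightarrow> (C s)^2 + (S s)^2 = 1"
  using arclength by (simp add: C_def S_def X_def Y_def)

lemma X_has_derivative: "s \<in> I \<Longrightarrow> (X has_real_derivative C s) (at s)"
  using smooth[of s 0 1] by (simp add: X_def C_def)

lemma Y_has_derivative: "s \<in> I \<Longrightarrow> (Y has_real_derivative S s) (at s)"
  using smooth[of s 0 2] by (simp add: Y_def S_def)

lemma tangent_higher_derivatives:
  assumes "s \<in> I"
  shows "(C has_real_derivative deriv C s) (at s)"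
    and "(S has_real_derivative deriv S s) (at s)"
    and "(deriv C has_real_derivative deriv (deriv C) s) (at s)"
    and "(deriv S has_real_derivative deriv (deriv S) s) (at s)"
    and "(deriv (deriv C) has_real_derivative deriv (deriv (deriv C)) s) (at s)"
    and "(deriv (deriv S) has_real_derivative deriv (deriv (deriv S)) s) (at s)"
  using smooth[OF assms, of 1 1] smooth[OF assms, of 1 2] smooth[OF assms, of 2 1]
    smooth[OF assms, of 2 2] smooth[OF assms, of 3 1] smooth[OF assms, of 3 2]
  by (simp_all add: C_def S_def X_def Y_def numeral_2_eq_2 numeral_3_eq_3)

lemma tangent_orthogonal_acceleration:
  assumes "s \<in> I"
  shows "C s * deriv C s + S s * deriv S s = 0"
proof -
  have "((\<lambda>s. (C s)^2 + (S s)^2) has_real_derivative 2 * C s * deriv C s + 2 * S s * deriv S s) (at s)"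
    using assms by (auto intro!: derivative_eq_intros tangent_higher_derivatives)
  moreover have "((\<lambda>s. (C s)^2 + (S s)^2) has_real_derivative 0) (at s)"
    by (rule has_field_derivative_transform_within_open[OF _ open_I assms, of "\<lambda>_. 1"])
       (simp_all add: unit_tangent)
  ultimately show ?thesis
    using DERIV_unique by fastforce
qed

lemma C_has_derivative: assumes "s \<in> I" shows "(C has_real_derivative - (S s * K s)) (at s)"
proof -
  have "deriv C s = - (S s * K s)"
    using tangent_orthogonal_acceleration[OF assms] unit_tangent[OF assms] unfolding K_eq by algebra
  then show ?thesis
    using tangent_higher_derivatives(1)[OF assms] by simp
qed

lemma S_has_derivative: assumes "s \<in> I" shows "(S has_real_derivative C s * K s) (at s)"
proof -
  have "deriv S s = C s * K s"
    using tangent_orthogonal_acceleration[OF assms] unit_tangent[OF assms] unfolding K_eq by algebra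
  then show ?thesis
    using tangent_higher_derivatives(2)[OF assms] by simp
qed

lemma K'_eq: assumes "s \<in> I" shows "K' s = C s * deriv (deriv S) s - S s * deriv (deriv C) s"
  unfolding K'_def K_eq using assms
  by (intro DERIV_imp_deriv) (auto intro!: derivative_eq_intros tangent_higher_derivatives simp: algebra_simps)

lemma K_has_derivative: assumes "s \<in> I" shows "(K has_real_derivative K' s) (at s)"
  unfolding K'_eq[OF assms] K_eq using assms
  by (auto intro!: derivative_eq_intros tangent_higher_derivatives simp: algebra_simps)

lemma K'_has_derivative: assumes "s \<in> I" shows "(K' has_real_derivative K'' s) (at s)"
proof -
  have "((\<lambda>s. C s * deriv (deriv S) s - S s * deriv (deriv C) s) has_real_derivative
      deriv C s * deriv (deriv S) s + C s * deriv (deriv (deriv S)) s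
      - (deriv S s * deriv (deriv C) s + S s * deriv (deriv (deriv C)) s)) (at s)"
    using assms by (auto intro!: derivative_eq_intros tangent_higher_derivatives)
  then have "(K' has_real_derivative
      deriv C s * deriv (deriv S) s + C s * deriv (deriv (deriv S)) s
      - (deriv S s * deriv (deriv C) s + S s * deriv (deriv (deriv C)) s)) (at s)"
    by (rule has_field_derivative_transform_within_open[OF _ open_I assms]) (simp add: K'_eq)
  then show ?thesis
    by (simp add: K''_def DERIV_imp_deriv)
qed

end

section \<open>The cylinder over a curve\<close>

definition heis_vertical :: "real^3" where
  "heis_vertical = vector [0, 0, 1]"

context arclength_curve
begin

(* unit_normal and horizontal_tangent are the horizontal lifts \<nu> and h of the normal and the
  tangent of the curve; with heis_vertical they form an orthonormal frame along the cylinder. *)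

definition unit_normal :: "real \<Rightarrow> real^3" where
  "unit_normal s = vector [- S s, C s, X s * C s]"

definition horizontal_tangent :: "real \<Rightarrow> real^3" where
  "horizontal_tangent s = vector [C s, S s, X s * S s]"

definition frame_vec :: "real \<Rightarrow> real \<Rightarrow> real \<Rightarrow> real \<Rightarrow> real^3" where
  "frame_vec s a b c = a *\<^sub>R unit_normal s + b *\<^sub>R horizontal_tangent s + c *\<^sub>R heis_vertical"

lemma frame_vec_eq_vector:
  "frame_vec s a b c = vector [b * C s - a * S s, a * C s + b * S s, X s * (a * C s + b * S s) + c]"
  by (simp add: frame_vec_def unit_normal_def horizontal_tangent_def heis_vertical_def vec_eq_iff
      forall_3 algebra_simps)

lemma frame_vec_linear:
  "frame_vec s a b c + frame_vec s a' b' c' = frame_vec s (a + a') (b + b') (c + c')"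
  "frame_vec s a b c - frame_vec s a' b' c' = frame_vec s (a - a') (b - b') (c - c')"
  "r *\<^sub>R frame_vec s a b c = frame_vec s (r * a) (r * b) (r * c)"
  "frame_vec s 0 0 0 = 0"
  by (simp_all add: frame_vec_def algebra_simps)

lemma ginner_frame_vec:
  assumes "s \<in> I" "p$1 = X s"
  shows "ginner heis_metric p (frame_vec s a b c) (frame_vec s a' b' c') = a * a' + b * b' + c * c'"
  using unit_tangent[OF assms(1)] assms(2)
  unfolding ginner_def frame_vec_eq_vector
  by (simp add: sum_3 heis_metric_def) algebra

lemma frame_vec_has_derivative:
  assumes "s \<in> I"
    and "(\<alpha> has_real_derivative \<alpha>') (at s)" "(\<beta> has_real_derivative \<beta>') (at s)"
    and "(c has_real_derivative c') (at s)"
  shows "((\<lambda>s. frame_vec s (\<alpha> s) (\<beta> s) (c s) $ k) has_real_derivative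
      frame_vec s (\<alpha>' + \<beta> s * K s) (\<beta>' - \<alpha> s * K s) (c' + \<alpha> s * (C s)^2 + \<beta> s * C s * S s) $ k) (at s)"
  unfolding frame_vec_eq_vector
  by (cases k rule: three_cases)
     (auto intro!: derivative_eq_intros X_has_derivative C_has_derivative S_has_derivative assms
       simp: algebra_simps power2_eq_square)

lemma cylinder_nth:
  "cylinder \<gamma> q $ 1 = X (q$1)" "cylinder \<gamma> q $ 2 = Y (q$1)" "cylinder \<gamma> q $ 3 = q$2"
  by (simp_all add: cylinder_def X_def Y_def)

definition cylinder_tangent :: "2 \<Rightarrow> real \<Rightarrow> real^3" where
  "cylinder_tangent a s = (if a = 1 then frame_vec s 0 1 (- (X s * S s)) else frame_vec s 0 0 1)"

lemma dphi_cylinder: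
  assumes "s \<in> I" "q$1 = s"
  shows "dphi (cylinder \<gamma>) a q = cylinder_tangent a s"
proof -
  have "pd (\<lambda>q. cylinder \<gamma> q $ 1) a q = (if a = 1 then C s else 0)"
    unfolding cylinder_nth
    by (rule pd_eq_if_depends_on_coordinate[OF open_I]) (use assms X_has_derivative in auto)
  moreover have "pd (\<lambda>q. cylinder \<gamma> q $ 2) a q = (if a = 1 then S s else 0)"
    unfolding cylinder_nth
    by (rule pd_eq_if_depends_on_coordinate[OF open_I]) (use assms Y_has_derivative in auto)
  moreover have "pd (\<lambda>q. cylinder \<gamma> q $ 3) a q = (if a = 2 then 1 else 0)"
    unfolding cylinder_nth using pd_coordinate_fun[where F="\<lambda>x. x" and F'=1 and m=2 and p=q] by simp
  ultimately show ?thesis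
    unfolding dphi_def cylinder_tangent_def frame_vec_eq_vector
    by (cases a rule: two_cases) (simp_all add: vec_eq_iff forall_3)
qed

definition cylinder_metric :: "real \<Rightarrow> 2 \<Rightarrow> 2 \<Rightarrow> real" where
  "cylinder_metric s a b =
     (if a = 1 \<and> b = 1 then 1 + (X s * S s)^2 else if a = 2 \<and> b = 2 then 1 else - (X s * S s))"

definition cylinder_metric_ds :: "real \<Rightarrow> 2 \<Rightarrow> 2 \<Rightarrow> real" where
  "cylinder_metric_ds s a b =
     (if a = 1 \<and> b = 1 then 2 * X s * S s * (C s * S s + X s * C s * K s)
      else if a = 2 \<and> b = 2 then 0 else - (C s * S s + X s * C s * K s))"

definition cylinder_metric_inv :: "real \<Rightarrow> 2 \<Rightarrow> 2 \<Rightarrow> real" where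
  "cylinder_metric_inv s a b =
     (if a = 1 \<and> b = 1 then 1 else if a = 2 \<and> b = 2 then 1 + (X s * S s)^2 else X s * S s)"

lemma indmetric_cylinder:
  assumes "s \<in> I" "q$1 = s"
  shows "indmetric heis_metric (cylinder \<gamma>) q a b = cylinder_metric s a b"
  unfolding indmetric_def dphi_cylinder[OF assms] cylinder_tangent_def
  using ginner_frame_vec[OF assms(1)] assms(2)
  by (cases a rule: two_cases; cases b rule: two_cases) (simp_all add: cylinder_nth cylinder_metric_def power2_eq_square)

lemma cylinder_metric_has_derivative:
  "s \<in> I \<Longrightarrow> ((\<lambda>s. cylinder_metric s a b) has_real_derivative cylinder_metric_ds s a b) (at s)"
  unfolding cylinder_metric_def cylinder_metric_ds_def
  by (cases a rule: two_cases; cases b rule: two_cases)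
     (auto intro!: derivative_eq_intros X_has_derivative S_has_derivative simp: algebra_simps power2_eq_square)

lemma minv_indmetric_cylinder:
  assumes "s \<in> I" "q$1 = s"
  shows "minv (indmetric heis_metric (cylinder \<gamma>) q) a b = cylinder_metric_inv s a b"
proof -
  have "minv (indmetric heis_metric (cylinder \<gamma>) q) a b = (\<chi> a b. cylinder_metric_inv s a b) $ a $ b"
    by (rule minv_eqI)
       (simp_all add: indmetric_cylinder[OF assms] matrix_matrix_mult_def vec_eq_iff forall_2 sum_2
          mat_def cylinder_metric_def cylinder_metric_inv_def power2_eq_square field_simps)
  then show ?thesis by simp
qed

lemma christoffel_indmetric_cylinder:
  assumes "s \<in> I" "q$1 = s"
  shows "christoffel (indmetric heis_metric (cylinder \<gamma>)) q c a b =
    (if c = 2 \<and> a = 1 \<and> b = 1 then - (C s * S s + X s * C s * K s) else 0)"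
proof -
  have "pd (\<lambda>q. indmetric heis_metric (cylinder \<gamma>) q a b) l q = (if l = 1 then cylinder_metric_ds s a b else 0)"
    for a b l
    by (rule pd_eq_if_depends_on_coordinate[OF open_I])
       (use assms in \<open>auto simp: indmetric_cylinder intro: cylinder_metric_has_derivative\<close>)
  then show ?thesis
    unfolding christoffel_def minv_indmetric_cylinder[OF assms]
    by (cases c rule: two_cases; cases a rule: two_cases; cases b rule: two_cases)
       (simp_all add: sum_2 cylinder_metric_inv_def cylinder_metric_ds_def field_simps power2_eq_square)
qed

(* The connection in the frame: \<partial>\<^sub>t turns \<nu> into h/2 and h into -\<nu>/2, and the terms
  with X S come from the vertical part of \<partial>\<^sub>s = h - X S \<partial>\<^sub>z. *)

lemma covd_frame_field:
  assumes "s \<in> I" "q$1 = s"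
    and V: "\<And>q. q$1 \<in> I \<Longrightarrow> V q = frame_vec (q$1) (\<alpha> (q$1)) (\<beta> (q$1)) (c (q$1))"
    and "(\<alpha> has_real_derivative \<alpha>') (at s)" "(\<beta> has_real_derivative \<beta>') (at s)"
    and "(c has_real_derivative c') (at s)"
  shows "covd heis_metric (cylinder \<gamma>) V 1 q =
      frame_vec s (\<alpha>' + \<beta> s * (K s + X s * S s / 2) - c s / 2)
                  (\<beta>' - \<alpha> s * (K s + X s * S s / 2)) (c' + \<alpha> s / 2)"
    and "covd heis_metric (cylinder \<gamma>) V 2 q = frame_vec s (- \<beta> s / 2) (\<alpha> s / 2) 0"
proof -
  let ?V' = "frame_vec s (\<alpha>' + \<beta> s * K s) (\<beta>' - \<alpha> s * K s) (c' + \<alpha> s * (C s)^2 + \<beta> s * C s * S s)"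
  have pd_V: "pd (\<lambda>q. V q $ k) a q = (if a = 1 then ?V' $ k else 0)" for a k
    by (rule pd_eq_if_depends_on_coordinate[OF open_I])
       (use assms in \<open>auto simp: V intro: frame_vec_has_derivative\<close>)
  note defs = covd_def pd_V christoffel_heis_metric cylinder_nth dphi_cylinder[OF assms(1,2)]
    V[OF assms(1)[folded assms(2)]] assms(2) cylinder_tangent_def frame_vec_eq_vector vec_eq_iff forall_3
  show "covd heis_metric (cylinder \<gamma>) V 1 q =
      frame_vec s (\<alpha>' + \<beta> s * (K s + X s * S s / 2) - c s / 2)
                  (\<beta>' - \<alpha> s * (K s + X s * S s / 2)) (c' + \<alpha> s / 2)"
    using unit_tangent[OF assms(1)] unfolding defs
    by (simp add: sum_3 heis_chr_def field_simps; (intro conjI)?; algebra)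
  show "covd heis_metric (cylinder \<gamma>) V 2 q = frame_vec s (- \<beta> s / 2) (\<alpha> s / 2) 0"
    unfolding defs by (simp add: sum_3 heis_chr_def field_simps)
qed

lemma tension_cylinder:
  assumes "s \<in> I" "q$1 = s"
  shows "tension heis_metric (cylinder \<gamma>) q = frame_vec s (K s) 0 0"
proof -
  have dphi1: "dphi (cylinder \<gamma>) 1 q' = frame_vec (q'$1) 0 1 (- (X (q'$1) * S (q'$1)))"
    and dphi2: "dphi (cylinder \<gamma>) 2 q' = frame_vec (q'$1) 0 0 1" if "q'$1 \<in> I" for q'
    using that by (simp_all add: dphi_cylinder cylinder_tangent_def)
  have "((\<lambda>s. - (X s * S s)) has_real_derivative - (C s * S s + X s * C s * K s)) (at s)"
    using assms(1) by (auto intro!: derivative_eq_intros X_has_derivative S_has_derivative)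
  note nabla_dphi1 = covd_frame_field[OF assms dphi1 DERIV_const DERIV_const this]
  note nabla_dphi2 = covd_frame_field[OF assms dphi2 DERIV_const DERIV_const DERIV_const]
  show ?thesis
    unfolding tension_def minv_indmetric_cylinder[OF assms] christoffel_indmetric_cylinder[OF assms]
      dphi_cylinder[OF assms]
    by (simp add: sum_2 cylinder_metric_inv_def cylinder_tangent_def nabla_dphi1 nabla_dphi2 frame_vec_linear)
qed

lemma covd_tension_cylinder:
  assumes "s \<in> I" "q$1 = s"
  shows "covd heis_metric (cylinder \<gamma>) (tension heis_metric (cylinder \<gamma>)) 1 q =
      frame_vec s (K' s) (- (K s * (K s + X s * S s / 2))) (K s / 2)"
    and "covd heis_metric (cylinder \<gamma>) (tension heis_metric (cylinder \<gamma>)) 2 q = frame_vec s 0 (K s / 2) 0"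
  using covd_frame_field[OF assms tension_cylinder[OF _ refl] K_has_derivative[OF assms(1)] DERIV_const DERIV_const]
  by simp_all

lemma roughlap_tension_cylinder:
  assumes "s \<in> I" "q$1 = s"
  shows "roughlap heis_metric (cylinder \<gamma>) (tension heis_metric (cylinder \<gamma>)) q =
      frame_vec s (K'' s - K s ^ 3 - K s / 2) (- 3 * K s * K' s) (K' s)"
proof -
  have d_second: "((\<lambda>s. - (K s * (K s + X s * S s / 2))) has_real_derivative
      - (K' s * (K s + X s * S s / 2) + K s * (K' s + (C s * S s + X s * C s * K s) / 2))) (at s)"
    using assms(1) by (auto intro!: derivative_eq_intros K_has_derivative X_has_derivative S_has_derivative
        simp: field_simps)
  have half_K: "((\<lambda>s. K s / 2) has_real_derivative K' s / 2) (at s)"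
    using assms(1) by (auto intro!: derivative_eq_intros K_has_derivative)
  note nabla_nabla1 = covd_frame_field[OF assms covd_tension_cylinder(1)[OF _ refl]
      K'_has_derivative[OF assms(1)] d_second half_K]
  note nabla_nabla2 = covd_frame_field[OF assms covd_tension_cylinder(2)[OF _ refl] DERIV_const half_K DERIV_const]
  show ?thesis
    using unit_tangent[OF assms(1)]
    unfolding roughlap_def minv_indmetric_cylinder[OF assms] christoffel_indmetric_cylinder[OF assms]
    by (simp add: sum_2 cylinder_metric_inv_def covd_tension_cylinder[OF assms] nabla_nabla1 nabla_nabla2
        frame_vec_linear)
       (rule arg_cong3[where f = "frame_vec s"]; simp add: field_simps power2_eq_square power3_eq_cube; algebra)
qed

lemma trace_riem_tension_cylinder:
  assumes "s \<in> I" "q$1 = s"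
  shows "(\<Sum>a\<in>UNIV. \<Sum>b\<in>UNIV. minv (indmetric heis_metric (cylinder \<gamma>) q) a b *\<^sub>R
      riem heis_metric (cylinder \<gamma> q) (dphi (cylinder \<gamma>) a q) (tension heis_metric (cylinder \<gamma>) q)
        (dphi (cylinder \<gamma>) b q)) = frame_vec s (- K s / 2) 0 0"
  using unit_tangent[OF assms(1)]
  unfolding minv_indmetric_cylinder[OF assms] dphi_cylinder[OF assms] tension_cylinder[OF assms]
    riem_def curv_heis_metric cylinder_nth assms(2) vec_eq_iff forall_3
  by (simp add: sum_2 sum_3 heis_chr_def heis_chr_dx_def cylinder_tangent_def cylinder_metric_inv_def
      frame_vec_eq_vector field_simps; (intro conjI)?; algebra)

lemma bitension_cylinder:
  assumes "s \<in> I" "q$1 = s"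
  shows "bitension heis_metric (cylinder \<gamma>) q = frame_vec s (K'' s - K s ^ 3 - K s) (- 3 * K s * K' s) (K' s)"
  unfolding bitension_def roughlap_tension_cylinder[OF assms] trace_riem_tension_cylinder[OF assms]
  by (simp add: frame_vec_linear)

lemma normalpart_frame_vec:
  assumes "s \<in> I" "q$1 = s"
  shows "normalpart heis_metric (cylinder \<gamma>) q (frame_vec s a b c) = frame_vec s a 0 0"
proof -
  have "cylinder \<gamma> q $ 1 = X s"
    using assms(2) by (simp add: cylinder_nth)
  note ginner = ginner_frame_vec[OF assms(1) this]
  show ?thesis
    unfolding normalpart_def minv_indmetric_cylinder[OF assms] dphi_cylinder[OF assms]
    by (simp add: sum_2 cylinder_tangent_def cylinder_metric_inv_def ginner frame_vec_linear)
       (rule arg_cong3[where f = "frame_vec s"]; simp add: field_simps power2_eq_square)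
qed

lemma frame_vec_normal_eq_zero_iff:
  assumes "s \<in> I"
  shows "frame_vec s a 0 0 = 0 \<longleftrightarrow> a = 0"
proof
  assume "frame_vec s a 0 0 = 0"
  then have "a * C s = 0" "a * S s = 0"
    by (simp_all add: frame_vec_eq_vector vec_eq_iff forall_3)
  moreover have "a = C s * (a * C s) + S s * (a * S s)"
    using unit_tangent[OF assms] by algebra
  ultimately show "a = 0"
    by (simp only: mult_zero_right add_0)
qed (simp add: frame_vec_linear)

lemma biminimality_defect_cylinder:
  assumes "s \<in> I" "q$1 = s"
  shows "normalpart heis_metric (cylinder \<gamma>) q (bitension heis_metric (cylinder \<gamma>) q)
      - lam *\<^sub>R normalpart heis_metric (cylinder \<gamma>) q (tension heis_metric (cylinder \<gamma>) q)
    = frame_vec s (K'' s - K s ^ 3 - (lam + 1) * K s) 0 0"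
  unfolding bitension_cylinder[OF assms] tension_cylinder[OF assms] normalpart_frame_vec[OF assms]
  by (simp add: frame_vec_linear algebra_simps)

lemma biminimal_cylinder_iff:
  "biminimal_immersion heis_metric (cylinder \<gamma>) {q. q$1 \<in> I} lam \<longleftrightarrow> biminimal_curve \<gamma> I (lam + 1)"
proof -
  have "biminimal_immersion heis_metric (cylinder \<gamma>) {q. q$1 \<in> I} lam \<longleftrightarrow>
      (\<forall>q::real^2. q$1 \<in> I \<longrightarrow> K'' (q$1) - K (q$1) ^ 3 - (lam + 1) * K (q$1) = 0)"
    unfolding biminimal_immersion_def
    by (auto simp: biminimality_defect_cylinder frame_vec_normal_eq_zero_iff)
  also have "\<dots> \<longleftrightarrow> (\<forall>s\<in>I. K'' s - K s ^ 3 - (lam + 1) * K s = 0)"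
    by (metis vector_2(1))
  finally show ?thesis
    unfolding biminimal_curve_def K''_eq K_def .
qed

end

theorem proposition5p2:
  fixes \<gamma> :: "real \<Rightarrow> real^2" and I :: "real set" and lam :: real
  assumes I: "open I" "is_interval I" "I \<noteq> {}"
    and smooth: "\<And>i n s. s \<in> I \<Longrightarrow>
        ((deriv ^^ n) (\<lambda>t. \<gamma> t $ i) has_real_derivative (deriv ^^ Suc n) (\<lambda>t. \<gamma> t $ i) s) (at s)"
    and arclength: "\<And>s. s \<in> I \<Longrightarrow> (deriv (\<lambda>t. \<gamma> t $ 1) s)^2 + (deriv (\<lambda>t. \<gamma> t $ 2) s)^2 = 1"
  shows "biminimal_immersion heis_metric (cylinder \<gamma>) {q. q$1 \<in> I} lam
         \<longleftrightarrow> biminimal_curve \<gamma> I (lam + 1)"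
proof -
  (* The equation is pointwise in s. *)
  interpret arclength_curve \<gamma> I
    by unfold_locales (use I(1) smooth arclength in auto)
  show ?thesis
    by (rule biminimal_cylinder_iff)
qed

end
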